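(* Let $R=\mathbb{K}[x_{i,i+1},x_{i,i+2}: i\in\mathbb{N}]$ and $I=\ker\varphi$, where $\varphi:R\to\mathbb{K}[x_i: i\in\mathbb{N}]$ is given by $\varphi(x_{i,i+1})=x_ix_{i+1}$, $\varphi(x_{i,i+2})=x_ix_{i+2}$. Then $I$ is not finitely generated up to shift, i.e. there is no finite subset $F\subseteq I$ such that the polynomials $\operatorname{sh}_k(f)$, $f\in F$, $k\in\mathbb{N}_0$, generate $I$.
   Context: $\mathbb{K}$ is a field; $\operatorname{sh}_k$ is the ring endomorphism of $R$ with $x_{i,j}\mapsto x_{i+k,j+k}$. *)

theory Defs
  imports Main "HOL-Library.Poly_Mapping"
begin

type_synonym ('v, 'k) mpoly = "('v \<Rightarrow>\<^sub>0 nat) \<Rightarrow>\<^sub>0 'k"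

text \<open>Variables of R: Edge1 i = x_{i,i+1}, Edge2 i = x_{i,i+2} (i ranges over nat).\<close>
datatype rvar = Edge1 nat | Edge2 nat

fun rvar_ends :: "rvar \<Rightarrow> nat \<times> nat" where
  "rvar_ends (Edge1 i) = (i, i + 1)"
| "rvar_ends (Edge2 i) = (i, i + 2)"

fun rvar_shift :: "nat \<Rightarrow> rvar \<Rightarrow> rvar" where
  "rvar_shift k (Edge1 i) = Edge1 (i + k)"
| "rvar_shift k (Edge2 i) = Edge2 (i + k)"

definition phi_mono :: "(rvar \<Rightarrow>\<^sub>0 nat) \<Rightarrow> (nat \<Rightarrow>\<^sub>0 nat)" where
  "phi_mono m = (\<Sum>v\<in>Poly_Mapping.keys m. Poly_Mapping.single (fst (rvar_ends v)) (Poly_Mapping.lookup m v)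
                             + Poly_Mapping.single (snd (rvar_ends v)) (Poly_Mapping.lookup m v))"

definition phi :: "(rvar, 'k::field) mpoly \<Rightarrow> (nat, 'k) mpoly" where
  "phi p = (\<Sum>m\<in>Poly_Mapping.keys p. Poly_Mapping.single (phi_mono m) (Poly_Mapping.lookup p m))"

definition shift_mono :: "nat \<Rightarrow> (rvar \<Rightarrow>\<^sub>0 nat) \<Rightarrow> (rvar \<Rightarrow>\<^sub>0 nat)" where
  "shift_mono k m = (\<Sum>v\<in>Poly_Mapping.keys m. Poly_Mapping.single (rvar_shift k v) (Poly_Mapping.lookup m v))"

definition sh :: "nat \<Rightarrow> (rvar, 'k::field) mpoly \<Rightarrow> (rvar, 'k) mpoly" where
  "sh k p = (\<Sum>m\<in>Poly_Mapping.keys p. Poly_Mapping.single (shift_mono k m) (Poly_Mapping.lookup p m))"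

definition ideal_gen :: "'a::comm_ring_1 set \<Rightarrow> 'a set" where
  "ideal_gen S = {\<Sum>i<n. c i * g i | (n::nat) c g. \<forall>i<n. g i \<in> S}"

definition kerI :: "(rvar, 'k::field) mpoly set" where
  "kerI = {p. phi p = 0}"

end

(*
  Read a monomial of R as a multigraph on the vertices 0, 1, 2, ... whose edges are {i, i+1} and
  {i, i+2}; then phi sends it to its degree vector, so two monomials have the same image iff they
  have the same vertex degrees.  For r >= 1 the closed walk 0, 1, 2, 4, ..., 4r, 4r+1, 4r+2, 4r,
  4r-2, ..., 2, 0 (two triangles joined by a path) has even length, so the edges traversed at odd
  and at even steps give monomials u_r and v_r with phi(u_r) = phi(v_r), and u_r - v_r lies in I.
  Since the dumbbell is an induced subgraph with a one-dimensional cycle space, every proper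
  divisor q of u_r is the only monomial with degree vector phi(q), so q has coefficient zero in
  every element of I.  As I is shift invariant, in a combination of shifted generators the
  coefficient of u_r can only come from u_r occurring in some sh_k(f) itself.  But u_r involves at
  least r variables, while shifting does not change the number of variables of a monomial; so no
  finite F works once r exceeds the number of variables of every monomial occurring in F.
*)
theory Submission
  imports Defs
begin

definition push_forward ::
    "('a \<Rightarrow> 'b) \<Rightarrow> ('a \<Rightarrow>\<^sub>0 'c::comm_monoid_add) \<Rightarrow> 'b \<Rightarrow>\<^sub>0 'c" where
  "push_forward f p =
     (\<Sum>x\<in>Poly_Mapping.keys p. Poly_Mapping.single (f x) (Poly_Mapping.lookup p x))"

lemma lookup_push_forward_superset:
  assumes "finite S" "Poly_Mapping.keys p \<subseteq> S"
  shows "Poly_Mapping.lookup (push_forward f p) y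
    = (\<Sum>x\<in>S. Poly_Mapping.lookup p x when f x = y)"
proof -
  have "Poly_Mapping.lookup (push_forward f p) y
      = (\<Sum>x\<in>Poly_Mapping.keys p. Poly_Mapping.lookup p x when f x = y)"
    by (simp add: push_forward_def lookup_sum lookup_single eq_commute)
  also have "\<dots> = (\<Sum>x\<in>S. Poly_Mapping.lookup p x when f x = y)"
    by (rule sum.mono_neutral_left) (use assms in \<open>auto simp: in_keys_iff\<close>)
  finally show ?thesis .
qed

lemma lookup_push_forward_fibre:
  assumes "finite A" "\<And>x. x \<in> Poly_Mapping.keys p \<Longrightarrow> f x = y \<longleftrightarrow> x \<in> A"
  shows "Poly_Mapping.lookup (push_forward f p) y = (\<Sum>x\<in>A. Poly_Mapping.lookup p x)"
proof -
  have "Poly_Mapping.lookup (push_forward f p) y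
      = (\<Sum>x\<in>Poly_Mapping.keys p \<union> A. Poly_Mapping.lookup p x when f x = y)"
    by (rule lookup_push_forward_superset) (use assms(1) in auto)
  also have "\<dots> = (\<Sum>x\<in>A. Poly_Mapping.lookup p x)"
    by (rule sum.mono_neutral_cong_right)
      (use assms in \<open>auto simp: in_keys_iff when_def\<close>)
  finally show ?thesis .
qed

lemma push_forward_add: "push_forward f (p + q) = push_forward f p + push_forward f q"
proof (rule poly_mapping_eqI)
  fix y
  let ?S = "Poly_Mapping.keys p \<union> Poly_Mapping.keys q"
  have "Poly_Mapping.keys (p + q) \<subseteq> ?S"
    by (rule keys_add)
  then show "Poly_Mapping.lookup (push_forward f (p + q)) y
      = Poly_Mapping.lookup (push_forward f p + push_forward f q) y"
    by (simp add: lookup_push_forward_superset[where S = ?S] lookup_add sum.distrib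
        when_add_distrib)
qed

lemma push_forward_zero [simp]: "push_forward f 0 = 0"
  by (simp add: push_forward_def)

lemma push_forward_single [simp]:
  "push_forward f (Poly_Mapping.single x c) = Poly_Mapping.single (f x) c"
  by (simp add: push_forward_def)

lemma push_forward_diff:
  fixes p q :: "'a \<Rightarrow>\<^sub>0 'c::ab_group_add"
  shows "push_forward f (p - q) = push_forward f p - push_forward f q"
  by (metis add_diff_cancel diff_add_cancel push_forward_add)

lemma push_forward_sum: "push_forward f (\<Sum>i\<in>I. p i) = (\<Sum>i\<in>I. push_forward f (p i))"
  by (induction I rule: infinite_finite_induct) (simp_all add: push_forward_add)

lemma push_forward_comp: "push_forward g (push_forward f p) = push_forward (g \<circ> f) p"
  unfolding push_forward_def[of f p] push_forward_sum by (simp add: push_forward_def[of "g \<circ> f"])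

lemma keys_push_forward: "Poly_Mapping.keys (push_forward f p) \<subseteq> f ` Poly_Mapping.keys p"
  unfolding push_forward_def by (rule order_trans[OF keys_sum]) auto

lemma card_keys_push_forward:
  "card (Poly_Mapping.keys (push_forward f p)) \<le> card (Poly_Mapping.keys p)"
  by (meson card_image_le card_mono finite_imageI finite_keys keys_push_forward le_trans)

lemma phi_conv_push_forward: "phi p = push_forward phi_mono p"
  by (simp add: phi_def push_forward_def)

lemma sh_conv_push_forward: "sh k p = push_forward (shift_mono k) p"
  by (simp add: sh_def push_forward_def)

lemma shift_mono_conv_push_forward: "shift_mono k m = push_forward (rvar_shift k) m"
  by (simp add: shift_mono_def push_forward_def)

lemma phi_mono_conv_push_forward:
  "phi_mono m = push_forward (fst \<circ> rvar_ends) m + push_forward (snd \<circ> rvar_ends) m"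
  by (simp add: phi_mono_def push_forward_def sum.distrib)

lemma rvar_ends_shift:
  "rvar_ends (rvar_shift k e) = (fst (rvar_ends e) + k, snd (rvar_ends e) + k)"
  by (cases e) simp_all

lemma phi_mono_shift_mono:
  "phi_mono (shift_mono k m) = push_forward (\<lambda>v. v + k) (phi_mono m)"
proof -
  have "(fst \<circ> rvar_ends) \<circ> rvar_shift k = (\<lambda>v. v + k) \<circ> (fst \<circ> rvar_ends)"
   and "(snd \<circ> rvar_ends) \<circ> rvar_shift k = (\<lambda>v. v + k) \<circ> (snd \<circ> rvar_ends)"
    by (auto simp: rvar_ends_shift)
  then show ?thesis
    by (simp only: phi_mono_conv_push_forward shift_mono_conv_push_forward push_forward_comp
        push_forward_add)
qed

lemma sh_kerI:
  assumes "p \<in> kerI"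
  shows "sh k p \<in> kerI"
proof -
  have "phi (sh k p) = push_forward (push_forward (\<lambda>v. v + k)) (phi p)"
    by (simp add: phi_conv_push_forward sh_conv_push_forward push_forward_comp comp_def
        phi_mono_shift_mono)
  then show ?thesis
    using assms by (simp add: kerI_def)
qed

definition vertex_degree :: "(rvar \<Rightarrow> 'a::comm_monoid_add) \<Rightarrow> nat \<Rightarrow> 'a" where
  "vertex_degree h v = h (Edge1 v) + h (Edge2 v)
     + (if 1 \<le> v then h (Edge1 (v - 1)) else 0) + (if 2 \<le> v then h (Edge2 (v - 2)) else 0)"

lemma lookup_phi_mono:
  "Poly_Mapping.lookup (phi_mono m) v = vertex_degree (Poly_Mapping.lookup m) v"
proof -
  let ?B = "(if 1 \<le> v then {Edge1 (v - 1)} else {})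
    \<union> (if 2 \<le> v then {Edge2 (v - 2)} else {})"
  have fst_fibre: "fst (rvar_ends e) = v \<longleftrightarrow> e \<in> {Edge1 v, Edge2 v}"
   and snd_fibre: "snd (rvar_ends e) = v \<longleftrightarrow> e \<in> ?B" for e
    by (cases e; auto)+
  have "Poly_Mapping.lookup (push_forward (fst \<circ> rvar_ends) m) v
      = (\<Sum>e\<in>{Edge1 v, Edge2 v}. Poly_Mapping.lookup m e)"
    by (rule lookup_push_forward_fibre) (simp_all add: fst_fibre)
  moreover have "Poly_Mapping.lookup (push_forward (snd \<circ> rvar_ends) m) v
      = (\<Sum>e\<in>?B. Poly_Mapping.lookup m e)"
    by (rule lookup_push_forward_fibre) (simp_all add: snd_fibre)
  ultimately show ?thesis
    by (cases "v = 0"; cases "v = 1")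
      (auto simp: phi_mono_conv_push_forward lookup_add vertex_degree_def)
qed

lemma phi_mono_eq_iff:
  "phi_mono m = phi_mono m'
    \<longleftrightarrow> vertex_degree (Poly_Mapping.lookup m) = vertex_degree (Poly_Mapping.lookup m')"
  by (metis ext lookup_phi_mono poly_mapping_eqI)

definition rigid :: "(rvar \<Rightarrow>\<^sub>0 nat) \<Rightarrow> bool" where
  "rigid m \<longleftrightarrow> (\<forall>m'. phi_mono m' = phi_mono m \<longrightarrow> m' = m)"

lemma lookup_kerI_rigid:
  assumes "p \<in> kerI" "rigid m"
  shows "Poly_Mapping.lookup p m = 0"
proof -
  have "Poly_Mapping.lookup (phi p) (phi_mono m) = (\<Sum>m'\<in>{m}. Poly_Mapping.lookup p m')"
    unfolding phi_conv_push_forward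
    by (rule lookup_push_forward_fibre) (use assms(2) in \<open>auto simp: rigid_def\<close>)
  then show ?thesis
    using assms(1) by (simp add: kerI_def)
qed

lemma lookup_mult_eq_0:
  assumes "\<And>l q. m = l + q \<Longrightarrow> Poly_Mapping.lookup g q = 0"
  shows "Poly_Mapping.lookup (c * g) m = 0"
proof -
  have "(Poly_Mapping.lookup g q when m = l + q) = 0" for l q
    using assms by (simp add: when_def)
  then show ?thesis
    by (simp add: lookup_mult)
qed

lemma lookup_ideal_gen_eq_0:
  assumes "p \<in> ideal_gen S" "\<And>g c. g \<in> S \<Longrightarrow> Poly_Mapping.lookup (c * g) m = 0"
  shows "Poly_Mapping.lookup p m = 0"
proof -
  from assms(1) obtain n :: nat and c g
    where "p = (\<Sum>i<n. c i * g i)" "\<forall>i<n. g i \<in> S"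
    unfolding ideal_gen_def by blast
  then show ?thesis
    by (simp add: lookup_sum assms(2))
qed

text \<open>The closed walk 0, 1, 2, 4, 6, ..., 4r, 4r+1, 4r+2, 4r, 4r-2, ..., 2, 0: the exponent of an edge
  in \<open>walk_odd_exps r\<close> (\<open>walk_even_exps r\<close>) is the number of odd (even) steps along it.
  The edges used form the \<open>dumbbell\<close>: the triangles on 0, 1, 2 and on 4r, 4r+1, 4r+2, joined by
  the path 2, 4, ..., 4r.\<close>

fun walk_odd_exps :: "nat \<Rightarrow> rvar \<Rightarrow> nat" where
  "walk_odd_exps r (Edge1 i) = (if i = 0 \<or> i = 4*r + 1 then 1 else 0)"
| "walk_odd_exps r (Edge2 i) = (if i mod 4 = 2 \<and> i < 4*r then 2 else 0)"

fun walk_even_exps :: "nat \<Rightarrow> rvar \<Rightarrow> nat" where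
  "walk_even_exps r (Edge1 i) = (if i = 1 \<or> i = 4*r then 1 else 0)"
| "walk_even_exps r (Edge2 i) =
     (if i = 0 \<or> i = 4*r then 1 else if i mod 4 = 0 \<and> i < 4*r then 2 else 0)"

definition dumbbell :: "nat \<Rightarrow> rvar set" where
  "dumbbell r = Edge1 ` {0, 1, 4*r, 4*r + 1} \<union> Edge2 ` {i. even i \<and> i \<le> 4*r}"

definition dumbbell_vertices :: "nat \<Rightarrow> nat set" where
  "dumbbell_vertices r = {v. v = 1 \<or> v = 4*r + 1 \<or> v = 4*r + 2 \<or> (even v \<and> v \<le> 4*r)}"

lemma vertex_degree_walk_exps:
  assumes "1 \<le> r"
  shows "vertex_degree (walk_odd_exps r) = vertex_degree (walk_even_exps r)"
proof
  fix v :: nat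
  have "v = 0 \<or> v = 1 \<or> (\<exists>q. v = 4*q + 2 \<or> v = 4*q + 3 \<or> v = 4*q + 4 \<or> v = 4*q + 5)"
    by presburger
  then show "vertex_degree (walk_odd_exps r) v = vertex_degree (walk_even_exps r) v"
    using assms by (elim disjE exE) (simp_all add: vertex_degree_def, presburger+)
qed

lemma vertex_degree_walk_odd_exps_outside:
  assumes "v \<notin> dumbbell_vertices r"
  shows "vertex_degree (walk_odd_exps r) v = 0"
proof -
  have mod4: "i mod 4 = 2 \<Longrightarrow> even i" for i :: nat
    by presburger
  have "v \<noteq> 0" "v \<noteq> 1" "v \<noteq> 4*r + 1" "v \<noteq> 4*r + 2" "even v \<Longrightarrow> 4*r < v"
    using assms by (auto simp: dumbbell_vertices_def intro: odd_pos)
  then show ?thesis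
    by (auto simp: vertex_degree_def dest!: mod4)
qed

lemma dumbbell_induced:
  assumes "1 \<le> r" "e \<notin> dumbbell r"
  shows "fst (rvar_ends e) \<notin> dumbbell_vertices r \<or> snd (rvar_ends e) \<notin> dumbbell_vertices r"
  using assms
  by (cases e) (simp_all add: dumbbell_def dumbbell_vertices_def image_iff, presburger+)

lemma walk_exps_in_dumbbell:
  "walk_odd_exps r e \<noteq> 0 \<or> walk_even_exps r e \<noteq> 0 \<Longrightarrow> e \<in> dumbbell r"
  by (cases e) (simp_all add: dumbbell_def image_iff split: if_splits, presburger+)

lemma walk_exps_disjoint: "1 \<le> r \<Longrightarrow> walk_odd_exps r e = 0 \<or> walk_even_exps r e = 0"
  by (cases e) auto

lemma le_vertex_degree:
  fixes h :: "rvar \<Rightarrow> nat"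
  assumes "v = fst (rvar_ends e) \<or> v = snd (rvar_ends e)"
  shows "h e \<le> vertex_degree h v"
  using assms by (cases e) (auto simp: vertex_degree_def Suc_le_eq)

lemma vertex_degree_mono:
  fixes g h :: "rvar \<Rightarrow> nat"
  shows "(\<And>e. g e \<le> h e) \<Longrightarrow> vertex_degree g v \<le> vertex_degree h v"
  unfolding vertex_degree_def by (intro add_mono) auto

lemma vanishes_off_dumbbell:
  fixes x y :: "rvar \<Rightarrow> nat"
  assumes "1 \<le> r" "\<And>e. y e \<le> walk_odd_exps r e" "vertex_degree x = vertex_degree y"
    and "e \<notin> dumbbell r"
  shows "x e = 0"
proof -
  obtain v where v: "v = fst (rvar_ends e) \<or> v = snd (rvar_ends e)" "v \<notin> dumbbell_vertices r"
    using dumbbell_induced[OF assms(1,4)] by blast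
  have "x e \<le> vertex_degree x v"
    using v(1) by (rule le_vertex_degree)
  also have "\<dots> = vertex_degree y v"
    using assms(3) by simp
  also have "\<dots> \<le> vertex_degree (walk_odd_exps r) v"
    using assms(2) by (rule vertex_degree_mono)
  also have "\<dots> = 0"
    using v(2) by (rule vertex_degree_walk_odd_exps_outside)
  finally show ?thesis
    by simp
qed

lemma dumbbell_flow_eq_0:
  fixes d :: "rvar \<Rightarrow> int"
  assumes r: "1 \<le> r" and flow: "\<And>v. vertex_degree d v = 0" and "d (Edge1 1) = 0"
    and support: "\<And>e. e \<notin> dumbbell r \<Longrightarrow> d e = 0"
  shows "d e = 0"
proof -
  have off1: "d (Edge1 i) = 0" if "i \<notin> {0, 1, 4*r, 4*r + 1}" for i
    using that support[of "Edge1 i"] by (auto simp: dumbbell_def)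
  have off2: "d (Edge2 i) = 0" if "odd i \<or> 4*r < i" for i
    using that support[of "Edge2 i"] by (auto simp: dumbbell_def image_iff)
  have start1: "d (Edge1 0) = 0"
    using flow[of 1] off2[of 1] \<open>d (Edge1 1) = 0\<close> by (simp add: vertex_degree_def)
  have start2: "d (Edge2 0) = 0"
    using flow[of 0] start1 by (simp add: vertex_degree_def)
  have path: "j < 2*r \<longrightarrow> d (Edge2 (2*j)) = 0" for j
  proof (induction j)
    case 0
    show ?case using start2 by simp
  next
    case (Suc j)
    show ?case
    proof
      assume "Suc j < 2*r"
      then have "d (Edge1 (2*j + 2)) = 0" "d (Edge1 (2*j + 1)) = 0" "d (Edge2 (2*j)) = 0"
        using off1 Suc.IH \<open>d (Edge1 1) = 0\<close> by (auto, cases "j = 0") auto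
      then show "d (Edge2 (2 * Suc j)) = 0"
        using flow[of "2*j + 2"] by (simp add: vertex_degree_def)
    qed
  qed
  have "d (Edge2 (4*r - 2)) = 0"
    using r path[of "2*r - 1"] by (simp add: diff_mult_distrib2)
  moreover have "d (Edge1 (4*r - 1)) = 0" "d (Edge1 (4*r + 2)) = 0"
    using r by (auto intro: off1)
  moreover have "d (Edge2 (4*r - 1)) = 0" "d (Edge2 (4*r + 1)) = 0" "d (Edge2 (4*r + 2)) = 0"
    using r by (auto intro: off2)
  ultimately have "d (Edge1 (4*r)) + d (Edge2 (4*r)) = 0"
    and "d (Edge1 (4*r + 1)) + d (Edge1 (4*r)) = 0"
    and "d (Edge1 (4*r + 1)) + d (Edge2 (4*r)) = 0"
    using r flow[of "4*r"] flow[of "4*r + 1"] flow[of "4*r + 2"]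
    by (simp_all add: vertex_degree_def)
  then have end1: "d (Edge1 (4*r)) = 0" "d (Edge1 (4*r + 1)) = 0"
    and end2: "d (Edge2 (4*r)) = 0"
    by linarith+
  have "d (Edge2 (2*j)) = 0" if "j \<le> 2*r" for j
    using path[of j] end2 that by (cases "j = 2*r") auto
  then show ?thesis
    using support[of e] start1 end1 \<open>d (Edge1 1) = 0\<close>
    by (cases "e \<in> dumbbell r") (auto simp: dumbbell_def elim!: evenE)
qed

text \<open>The zero flows on the dumbbell are the multiples of \<open>walk_odd_exps r - walk_even_exps r\<close>,
  so \<open>x = y - a (walk_odd_exps r - walk_even_exps r)\<close>; if \<open>a > 0\<close>, nonnegativity of \<open>x\<close>
  forces \<open>y \<ge> walk_odd_exps r\<close>.\<close>

lemma rigid_below_walk_odd_exps: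
  fixes x y :: "rvar \<Rightarrow> nat"
  assumes r: "1 \<le> r" and below: "\<And>e. y e \<le> walk_odd_exps r e"
    and deg: "vertex_degree x = vertex_degree y"
  shows "x = y \<or> y = walk_odd_exps r"
proof -
  define a where "a = int (x (Edge1 1))"
  define d where "d e = int (x e) - int (y e)
      + a * (int (walk_odd_exps r e) - int (walk_even_exps r e))" for e
  have "vertex_degree d v = int (vertex_degree x v) - int (vertex_degree y v)
      + a * (int (vertex_degree (walk_odd_exps r) v)
             - int (vertex_degree (walk_even_exps r) v))" for v
    by (cases "v = 0"; cases "v = 1") (simp_all add: d_def vertex_degree_def algebra_simps)
  then have flow: "vertex_degree d v = 0" for v
    using deg vertex_degree_walk_exps[OF r] by simp
  have "y (Edge1 1) = 0"
    using below[of "Edge1 1"] r by simp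
  then have "d (Edge1 1) = 0"
    using r by (simp add: d_def a_def)
  moreover have "d e = 0" if "e \<notin> dumbbell r" for e
  proof -
    have "walk_odd_exps r e = 0" "walk_even_exps r e = 0"
      using that walk_exps_in_dumbbell by blast+
    moreover have "x e = 0"
      using r below deg that by (rule vanishes_off_dumbbell)
    ultimately show ?thesis
      using below[of e] by (simp add: d_def)
  qed
  ultimately have "d e = 0" for e
    using r flow dumbbell_flow_eq_0 by blast
  then have x_eq:
    "int (x e) = int (y e) - a * (int (walk_odd_exps r e) - int (walk_even_exps r e))" for e
    unfolding d_def by (simp add: algebra_simps)
  show ?thesis
  proof (cases "a = 0")
    case True
    then show ?thesis
      using x_eq by auto
  next
    case False
    have "y e = walk_odd_exps r e" for e
    proof (cases "walk_odd_exps r e = 0")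
      case True
      then show ?thesis using below[of e] by simp
    next
      case False
      then have "walk_even_exps r e = 0"
        using walk_exps_disjoint[OF r, of e] by simp
      then have "int (y e) = int (x e) + a * int (walk_odd_exps r e)"
        using x_eq[of e] by simp
      moreover have "int (walk_odd_exps r e) \<le> a * int (walk_odd_exps r e)"
        using \<open>a \<noteq> 0\<close> by (simp add: a_def mult_le_cancel_right1)
      ultimately have "walk_odd_exps r e \<le> y e"
        by linarith
      then show ?thesis
        using below[of e] by simp
    qed
    then show ?thesis
      by blast
  qed
qed

definition walk_odd_mono :: "nat \<Rightarrow> rvar \<Rightarrow>\<^sub>0 nat" where
  "walk_odd_mono r = Abs_poly_mapping (walk_odd_exps r)"

definition walk_even_mono :: "nat \<Rightarrow> rvar \<Rightarrow>\<^sub>0 nat" where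
  "walk_even_mono r = Abs_poly_mapping (walk_even_exps r)"

lemma finite_dumbbell: "finite (dumbbell r)"
  by (simp add: dumbbell_def)

lemma lookup_walk_monos [simp]:
  "Poly_Mapping.lookup (walk_odd_mono r) = walk_odd_exps r"
  "Poly_Mapping.lookup (walk_even_mono r) = walk_even_exps r"
proof -
  have "finite {e. walk_odd_exps r e \<noteq> 0}" "finite {e. walk_even_exps r e \<noteq> 0}"
    using walk_exps_in_dumbbell by (auto intro: finite_subset[OF _ finite_dumbbell])
  then show "Poly_Mapping.lookup (walk_odd_mono r) = walk_odd_exps r"
    and "Poly_Mapping.lookup (walk_even_mono r) = walk_even_exps r"
    by (simp_all add: walk_odd_mono_def walk_even_mono_def)
qed

lemma walk_monos_neq: "walk_odd_mono r \<noteq> walk_even_mono r"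
proof
  assume "walk_odd_mono r = walk_even_mono r"
  then have "walk_odd_exps r (Edge2 0) = walk_even_exps r (Edge2 0)"
    by (metis lookup_walk_monos)
  then show False
    by simp
qed

lemma walk_binomial_in_kerI:
  assumes "1 \<le> r"
  shows "Poly_Mapping.single (walk_odd_mono r) 1 - Poly_Mapping.single (walk_even_mono r) 1
    \<in> kerI"
proof -
  have "phi_mono (walk_odd_mono r) = phi_mono (walk_even_mono r)"
    using vertex_degree_walk_exps[OF assms] by (simp add: phi_mono_eq_iff)
  then show ?thesis
    by (simp add: kerI_def phi_conv_push_forward push_forward_diff)
qed

lemma card_keys_walk_odd_mono: "r \<le> card (Poly_Mapping.keys (walk_odd_mono r))"
proof -
  have "(4*t + 2) mod 4 = (2::nat)" for t
    by presburger
  then have "(\<lambda>t. Edge2 (4*t + 2)) ` {..<r} \<subseteq> Poly_Mapping.keys (walk_odd_mono r)"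
    by (auto simp: in_keys_iff simp del: add_2_eq_Suc')
  moreover have "card ((\<lambda>t. Edge2 (4*t + 2)) ` {..<r}) = r"
    by (simp add: card_image inj_on_def)
  ultimately show ?thesis
    by (metis card_mono finite_keys)
qed

lemma rigid_proper_divisor_walk_odd_mono:
  assumes "1 \<le> r" "walk_odd_mono r = l + q" "q \<noteq> walk_odd_mono r"
  shows "rigid q"
  unfolding rigid_def
proof (intro allI impI)
  fix q' assume "phi_mono q' = phi_mono q"
  moreover have "Poly_Mapping.lookup q e \<le> walk_odd_exps r e" for e
    using arg_cong[OF assms(2), of "\<lambda>m. Poly_Mapping.lookup m e"] by (simp add: lookup_add)
  ultimately have "Poly_Mapping.lookup q' = Poly_Mapping.lookup q
      \<or> Poly_Mapping.lookup q = walk_odd_exps r"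
    using assms(1) rigid_below_walk_odd_exps unfolding phi_mono_eq_iff by blast
  then show "q' = q"
    using assms(3) by (metis lookup_walk_monos(1) poly_mapping_eqI)
qed

lemma lookup_mult_sh_walk_odd_mono:
  assumes "f \<in> kerI" "1 \<le> r"
    and "\<And>m. m \<in> Poly_Mapping.keys f \<Longrightarrow> card (Poly_Mapping.keys m) < r"
  shows "Poly_Mapping.lookup (c * sh k f) (walk_odd_mono r) = 0"
proof (rule lookup_mult_eq_0)
  fix l q
  assume split: "walk_odd_mono r = l + q"
  show "Poly_Mapping.lookup (sh k f) q = 0"
  proof (cases "q = walk_odd_mono r")
    case True
    have "walk_odd_mono r \<notin> Poly_Mapping.keys (sh k f)"
    proof
      assume "walk_odd_mono r \<in> Poly_Mapping.keys (sh k f)"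
      then obtain m where "m \<in> Poly_Mapping.keys f" "walk_odd_mono r = shift_mono k m"
        using keys_push_forward by (fastforce simp: sh_conv_push_forward)
      then have "card (Poly_Mapping.keys (walk_odd_mono r)) < r"
        using assms(3) card_keys_push_forward le_less_trans
        by (metis shift_mono_conv_push_forward)
      then show False
        using card_keys_walk_odd_mono[of r] by simp
    qed
    then show ?thesis
      using True by (simp add: in_keys_iff)
  next
    case False
    then have "rigid q"
      by (rule rigid_proper_divisor_walk_odd_mono[OF assms(2) split])
    then show ?thesis
      using sh_kerI[OF assms(1)] by (simp add: lookup_kerI_rigid)
  qed
qed

theorem corollary6p9:
  shows "\<not> (\<exists>F. finite F \<and> F \<subseteq> (kerI :: (rvar, 'k::field) mpoly set) \<and>
            ideal_gen {sh k f | k f. f \<in> F} = kerI)"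
proof
  assume "\<exists>F. finite F \<and> F \<subseteq> (kerI :: (rvar, 'k::field) mpoly set) \<and>
            ideal_gen {sh k f | k f. f \<in> F} = kerI"
  then obtain F :: "(rvar, 'k) mpoly set"
    where F: "finite F" "F \<subseteq> kerI" and gen: "ideal_gen {sh k f | k f. f \<in> F} = kerI"
    by blast
  define r where "r = Suc (Max (card ` Poly_Mapping.keys ` (\<Union>f\<in>F. Poly_Mapping.keys f)))"
  have small: "card (Poly_Mapping.keys m) < r" if "f \<in> F" "m \<in> Poly_Mapping.keys f" for f m
  proof -
    have "card (Poly_Mapping.keys m)
        \<le> Max (card ` Poly_Mapping.keys ` (\<Union>f\<in>F. Poly_Mapping.keys f))"
      using that F(1) by (intro Max_ge) auto
    then show ?thesis
      by (simp add: r_def)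
  qed
  have r: "1 \<le> r"
    by (simp add: r_def)
  let ?p = "Poly_Mapping.single (walk_odd_mono r) 1 - Poly_Mapping.single (walk_even_mono r) 1
    :: (rvar, 'k) mpoly"
  have "?p \<in> ideal_gen {sh k f | k f. f \<in> F}"
    using gen walk_binomial_in_kerI[OF r] by simp
  then have "Poly_Mapping.lookup ?p (walk_odd_mono r) = 0"
    by (rule lookup_ideal_gen_eq_0)
      (use F(2) r small in \<open>auto intro!: lookup_mult_sh_walk_odd_mono\<close>)
  moreover have "Poly_Mapping.lookup ?p (walk_odd_mono r) = 1"
    using walk_monos_neq[of r] by (simp add: lookup_minus lookup_single)
  ultimately show False
    by simp
qed

end
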